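(* Consider the iterates of SAS-ADMM and fix $k\ge0$ with $\eta_k\in(0,1/\nu)$. Then for every $w=(x;y;\lambda)\in\Omega$, $$F(w)-F(\tilde w^k)+(w-\tilde w^k)^\top\mathcal J(w)\ge\frac12\Big\{\|w-w^{k+1}\|_{\tilde Q_k}^2-\|w-w^k\|_{\tilde Q_k}^2+\|w^k-\tilde w^k\|_{\tilde G_k}^2\Big\}+\zeta^k(x),$$ where $$\tilde Q_k=\begin{bmatrix}\mathcal D_k&0&0\\0&L+\big(1-\frac{\tau s}{\tau+s}\big)\beta B^\top B&-\frac{\tau}{\tau+s}B^\top\\0&-\frac{\tau}{\tau+s}B&\frac{1}{\beta(\tau+s)}I\end{bmatrix},\qquad \tilde G_k=\begin{bmatrix}\mathcal D_k&0&0\\0&L+(1-s)\beta B^\top B&(s-1)B^\top\\0&(s-1)B&\frac{2-\tau-s}{\beta}I\end{bmatrix}.$$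
   Context: Setting. $\mathcal X\subset\mathbb R^{n_1}$, $\mathcal Y\subset\mathbb R^{n_2}$ are nonempty closed convex sets; $A\in\mathbb R^{n\times n_1}$, $B\in\mathbb R^{n\times n_2}$, $b\in\mathbb R^n$; $g:\mathcal Y\to\mathbb R\cup\{+\infty\}$ is proper convex; $f=\frac1N\sum_{j=1}^N f_j$, each $f_j$ real-valued, convex and continuously differentiable on an open set containing $\mathcal X$. The problem is $\min\{f(x)+g(y): x\in\mathcal X,\ y\in\mathcal Y,\ Ax+By=b\}$. A fixed symmetric positive definite $H\in\mathbb R^{n_1\times n_1}$ and a constant $\nu>0$ satisfy $\|\nabla f_j(x_1)-\nabla f_j(x_2)\|_{H^{-1}}\le \nu\|x_1-x_2\|_H$ for all $x_1,x_2\in\mathcal X$ and all $j$. For a symmetric matrix $G$, $\|v\|_G^2:=v^\top G v$ (also when $G$ is indefinite); $G_1\succeq G_2$ means $G_1-G_2$ is positive semidefinite. $\mathcal L_\beta(x,y,\lambda)=f(x)+g(y)-\lambda^\top(Ax+By-b)+\frac\beta2\|Ax+By-b\|^2$. $\Delta:=\{(\tau,s)\in\mathbb R^2:\ \tau+s>0,\ \tau\le1,\ -\tau^2-s^2-\tau s+\tau+s+1\ge0\}$. Subroutine xsub. Inputs: $x^k\in\mathcal X$, $\breve x^k$, $h\in\mathbb R^{n_1}$, an integer $m_k\ge1$, $\eta_k>0$, a symmetric matrix $M_k$. Set $x_1=x^k$, $\breve x_1=\breve x^k$. For $t=1,\dots,m_k$: draw $\xi_t$ uniformly from $\{1,\dots,N\}$,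 independently of everything generated before; set $\beta_t=2/(t+1)$, $\gamma_t=2/(t\eta_k)$, $\hat x_t=\beta_t\breve x_t+(1-\beta_t)x_t$, $d_t=\nabla f_{\xi_t}(\hat x_t)+e_t$ where $e_t$ is a random vector whose conditional expectation given all previously generated random quantities and $\xi_t$ is $0$; $\breve x_{t+1}=\arg\min_{x\in\mathcal X}\{\langle d_t+h,x\rangle+\frac{\gamma_t}2\|x-\breve x_t\|_H^2+\frac12\|x-x^k\|_{M_k}^2\}$; $x_{t+1}=\beta_t\breve x_{t+1}+(1-\beta_t)x_t$. Output $x^{k+1}=x_{m_k+1}$, $\breve x^{k+1}=\breve x_{m_k+1}$. Put $\delta_t=\nabla f(\hat x_t)-d_t$ (inner quantities of outer iteration $k$), and for $x\in\mathcal X$ $$\zeta^k(x)=\frac{2}{m_k(m_k+1)}\Big[\frac1{\eta_k}\big(\|x-\breve x^{k+1}\|_H^2-\|x-\breve x^k\|_H^2\big)-\sum_{t=1}^{m_k}t\langle\delta_t,\breve x_t-x\rangle-\frac{\eta_k}{4(1-\eta_k\nu)}\sum_{t=1}^{m_k}t^2\|\delta_t\|_{H^{-1}}^2\Big].$$ Algorithm SAS-ADMM. Parameters: $\beta>0$, the matrix $H$, a symmetric positive semidefinite $L\in\mathbb R^{n_2\times n_2}$, $(\tau,s)\in\Delta$. Start: $(x^0,y^0,\lambda^0)\in\mathcal X\times\mathcal Y\times\mathbb R^n$, $\breve x^0=x^0$. For $k=0,1,\dots$: choose an integer $m_k\ge1$, $\eta_k>0$, and a symmetric $M_k$ with $\mathcal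 D_k:=M_k-\beta A^\top A\succeq0$; set $h^k=-A^\top[\lambda^k-\beta(Ax^k+By^k-b)]$; compute $(x^{k+1},\breve x^{k+1})$ by xsub with inputs $x^k,\breve x^k,h^k,m_k,\eta_k,M_k$; $\lambda^{k+1/2}=\lambda^k-\tau\beta(Ax^{k+1}+By^k-b)$; $y^{k+1}\in\arg\min_{y\in\mathcal Y}\mathcal L_\beta(x^{k+1},y,\lambda^{k+1/2})+\frac12\|y-y^k\|_L^2$ (a minimizer is assumed to exist); $\lambda^{k+1}=\lambda^{k+1/2}-s\beta(Ax^{k+1}+By^{k+1}-b)$. Notation. $\Omega=\mathcal X\times\mathcal Y\times\mathbb R^n$; $w=(x;y;\lambda)$; $F(w)=f(x)+g(y)$; $\mathcal J(w)=(-A^\top\lambda;\,-B^\top\lambda;\,Ax+By-b)$; $w^k=(x^k;y^k;\lambda^k)$; $\tilde\lambda^k=\lambda^k-\beta(Ax^{k+1}+By^k-b)$; $\tilde w^k=(x^{k+1};y^{k+1};\tilde\lambda^k)$. *)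

theory Defs
  imports "HOL-Analysis.Analysis" "HOL-Library.Extended_Real"
begin

definition qf :: "real^'n^'n \<Rightarrow> real^'n \<Rightarrow> real" where
  "qf G v = v \<bullet> (G *v v)"

definition symmetric_mat :: "real^'n^'n \<Rightarrow> bool" where
  "symmetric_mat G \<longleftrightarrow> transpose G = G"

definition psd :: "real^'n^'n \<Rightarrow> bool" where
  "psd G \<longleftrightarrow> symmetric_mat G \<and> (\<forall>v. 0 \<le> qf G v)"

definition pd :: "real^'n^'n \<Rightarrow> bool" where
  "pd G \<longleftrightarrow> symmetric_mat G \<and> (\<forall>v. v \<noteq> 0 \<longrightarrow> 0 < qf G v)"

definition proper_convex_on :: "'a::real_vector set \<Rightarrow> ('a \<Rightarrow> ereal) \<Rightarrow> bool" where
  "proper_convex_on Y g \<longleftrightarrow>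
     (\<forall>y\<in>Y. g y \<noteq> -\<infinity>) \<and> (\<exists>y\<in>Y. g y \<noteq> \<infinity>) \<and>
     (\<forall>u\<in>Y. \<forall>v\<in>Y. \<forall>t::real. 0 \<le> t \<and> t \<le> 1 \<longrightarrow>
        g ((1 - t) *\<^sub>R u + t *\<^sub>R v) \<le> ereal (1 - t) * g u + ereal t * g v)"

definition Delta_set :: "(real \<times> real) set" where
  "Delta_set = {(\<tau>, s). \<tau> + s > 0 \<and> \<tau> \<le> 1 \<and> 0 \<le> - (\<tau> * \<tau>) - s * s - \<tau> * s + \<tau> + s + 1}"

definition block3_qf ::
  "real^'a^'a \<Rightarrow> real^'b^'a \<Rightarrow> real^'c^'a \<Rightarrow>
   real^'a^'b \<Rightarrow> real^'b^'b \<Rightarrow> real^'c^'b \<Rightarrow>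
   real^'a^'c \<Rightarrow> real^'b^'c \<Rightarrow> real^'c^'c \<Rightarrow>
   ((real^'a) \<times> (real^'b) \<times> (real^'c)) \<Rightarrow> real" where
  "block3_qf M11 M12 M13 M21 M22 M23 M31 M32 M33 w =
     (case w of (u, v, l) \<Rightarrow>
        u \<bullet> (M11 *v u) + u \<bullet> (M12 *v v) + u \<bullet> (M13 *v l)
      + v \<bullet> (M21 *v u) + v \<bullet> (M22 *v v) + v \<bullet> (M23 *v l)
      + l \<bullet> (M31 *v u) + l \<bullet> (M32 *v v) + l \<bullet> (M33 *v l))"

definition Qtilde_qf ::
  "real^'a^'a \<Rightarrow> real^'b^'b \<Rightarrow> real^'b^'c \<Rightarrow> real \<Rightarrow> real \<Rightarrow> real \<Rightarrow>
   ((real^'a) \<times> (real^'b) \<times> (real^'c)) \<Rightarrow> real" where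
  "Qtilde_qf D L B \<beta> \<tau> s =
     block3_qf D 0 0
               0 (L + ((1 - \<tau> * s / (\<tau> + s)) * \<beta>) *\<^sub>R (transpose B ** B)) ((- \<tau> / (\<tau> + s)) *\<^sub>R transpose B)
               0 ((- \<tau> / (\<tau> + s)) *\<^sub>R B) ((1 / (\<beta> * (\<tau> + s))) *\<^sub>R mat 1)"

definition Gtilde_qf ::
  "real^'a^'a \<Rightarrow> real^'b^'b \<Rightarrow> real^'b^'c \<Rightarrow> real \<Rightarrow> real \<Rightarrow> real \<Rightarrow>
   ((real^'a) \<times> (real^'b) \<times> (real^'c)) \<Rightarrow> real" where
  "Gtilde_qf D L B \<beta> \<tau> s =
     block3_qf D 0 0
               0 (L + ((1 - s) * \<beta>) *\<^sub>R (transpose B ** B)) ((s - 1) *\<^sub>R transpose B)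
               0 ((s - 1) *\<^sub>R B) (((2 - \<tau> - s) / \<beta>) *\<^sub>R mat 1)"

text \<open>zeta^k(x): bx_old = breve x^k, bx_new = breve x^{k+1}, bxs t = breve x_t, \<delta> t = delta_t.\<close>
definition zeta ::
  "real^'a^'a \<Rightarrow> real \<Rightarrow> real \<Rightarrow> nat \<Rightarrow> real^'a \<Rightarrow> real^'a \<Rightarrow>
   (nat \<Rightarrow> real^'a) \<Rightarrow> (nat \<Rightarrow> real^'a) \<Rightarrow> real^'a \<Rightarrow> real" where
  "zeta H \<nu> \<eta> m bx_old bx_new bxs \<delta> x =
     2 / (real m * (real m + 1)) *
       ((1 / \<eta>) * (qf H (x - bx_new) - qf H (x - bx_old))
        - (\<Sum>t = 1..m. real t * (\<delta> t \<bullet> (bxs t - x)))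
        - \<eta> / (4 * (1 - \<eta> * \<nu>)) * (\<Sum>t = 1..m. (real t)^2 * qf (matrix_inv H) (\<delta> t)))"

definition favg :: "nat \<Rightarrow> (nat \<Rightarrow> 'a \<Rightarrow> real) \<Rightarrow> 'a \<Rightarrow> real" where
  "favg N fj z = (1 / real N) * (\<Sum>j = 1..N. fj j z)"

definition gavg :: "nat \<Rightarrow> (nat \<Rightarrow> 'a \<Rightarrow> 'b::real_vector) \<Rightarrow> 'a \<Rightarrow> 'b" where
  "gavg N gj z = (1 / real N) *\<^sub>R (\<Sum>j = 1..N. gj j z)"

definition Lagr :: "(real^'a \<Rightarrow> real) \<Rightarrow> (real^'b \<Rightarrow> ereal) \<Rightarrow> real^'a^'c \<Rightarrow> real^'b^'c \<Rightarrow> real^'c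
    \<Rightarrow> real \<Rightarrow> real^'a \<Rightarrow> real^'b \<Rightarrow> real^'c \<Rightarrow> ereal" where
  "Lagr f g A B b \<beta> x y l =
     ereal (f x) + g y + ereal (- (l \<bullet> (A *v x + B *v y - b)) + \<beta> / 2 * (norm (A *v x + B *v y - b))^2)"

end

theory Submission
  imports Defs
begin

text \<open>
  The \<open>x\<close>-subproblem is an accelerated stochastic gradient run on the objective
  \<open>f(x) + \<langle>h\<^sup>k, x\<rangle> + \<parallel>x - x\<^sup>k\<parallel>\<^sup>2/2\<close> (norm of \<open>M\<^sub>k\<close>). For one inner step, the descent lemma,
  convexity of \<open>f\<close>, the three-point property of the proximal step and Young's inequality for the
  gradient error \<open>\<delta>\<^sub>t\<close> give a contraction with factor \<open>1 - \<beta>\<^sub>t\<close>. Weighted by \<open>t(t+1)\<close>, the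
  objective gap plus the \<open>H\<close>-distance of the auxiliary iterate to \<open>x\<close> telescopes, which bounds the
  \<open>x\<close>-part of the variational inequality by \<open>\<zeta>\<^sup>k(x)\<close>. The \<open>y\<close>-subproblem is solved exactly, so its
  first-order optimality condition holds. Adding the two and using both multiplier updates, the
  remaining linear terms combine, by a purely algebraic identity, into the differences of the
  quadratic forms \<open>Q\<^sub>k\<close> and \<open>G\<^sub>k\<close>.
\<close>

section \<open>Quadratic forms\<close>

lemma symmetric_mat_inner_commute:
  assumes "symmetric_mat (G::real^'n^'n)"
  shows "a \<bullet> (G *v b) = b \<bullet> (G *v a)"
proof -
  have "a \<bullet> (G *v b) = (a v* G) \<bullet> b" by (simp add: dot_lmul_matrix)
  also have "a v* G = transpose G *v a" by simp
  also have "\<dots> = G *v a" using assms by (simp add: symmetric_mat_def)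
  finally show ?thesis by (simp add: inner_commute)
qed

lemma qf_add:
  assumes "symmetric_mat G"
  shows "qf G (a + b) = qf G a + 2 * (a \<bullet> (G *v b)) + qf G b"
  using symmetric_mat_inner_commute[OF assms, of a b]
  by (simp add: qf_def matrix_vector_right_distrib inner_add_left inner_add_right)

lemma qf_diff:
  assumes "symmetric_mat G"
  shows "qf G (a - b) = qf G a - 2 * (a \<bullet> (G *v b)) + qf G b"
  using symmetric_mat_inner_commute[OF assms, of a b]
  by (simp add: qf_def matrix_vector_mult_diff_distrib inner_diff_left inner_diff_right)

lemma qf_scaleR: "qf G (c *\<^sub>R a) = c\<^sup>2 * qf G a"
  by (simp add: qf_def matrix_vector_mult_scaleR power2_eq_square)

lemma qf_minus: "qf G (- v) = qf G v"
  using qf_scaleR[of G "-1" v] by simp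

lemma qf_transpose_mult_self: "qf (transpose A ** A) v = (A *v v) \<bullet> (A *v v)"
  by (simp add: qf_def matrix_vector_mul_assoc[symmetric] dot_lmul_matrix[symmetric] inner_commute)

lemma qf_diff_transpose_mult_self:
  "qf (M - \<beta> *\<^sub>R (transpose A ** A)) v = qf M v - \<beta> * ((A *v v) \<bullet> (A *v v))"
proof -
  have "(\<beta> *\<^sub>R (transpose A ** A)) *v v = \<beta> *\<^sub>R ((transpose A ** A) *v v)"
    by (simp add: scaleR_matrix_vector_assoc)
  then show ?thesis using qf_transpose_mult_self[of A v]
    by (simp add: qf_def matrix_vector_mult_diff_rdistrib inner_diff_right)
qed

lemma psd_qf_convex:
  assumes G: "psd G" and t: "0 \<le> t" "t \<le> 1"
  shows "qf G (t *\<^sub>R a + (1 - t) *\<^sub>R b) \<le> t * qf G a + (1 - t) * qf G b"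
proof -
  have S: "symmetric_mat G" using G by (simp add: psd_def)
  have "t * qf G a + (1 - t) * qf G b - qf G (t *\<^sub>R a + (1 - t) *\<^sub>R b) = t * (1 - t) * qf G (a - b)"
    using symmetric_mat_inner_commute[OF S, of a b]
    by (simp add: qf_add[OF S] qf_diff[OF S] qf_scaleR matrix_vector_mult_scaleR)
       (simp add: qf_def power2_eq_square algebra_simps)
  moreover have "0 \<le> t * (1 - t) * qf G (a - b)" using G t by (simp add: psd_def)
  ultimately show ?thesis by linarith
qed

lemma psd_of_psd_minus_transpose_mult_self:
  assumes "psd (M - \<beta> *\<^sub>R (transpose A ** A))" "symmetric_mat M" "0 \<le> \<beta>"
  shows "psd M"
proof -
  have "0 \<le> qf M v" for v
  proof -
    have "0 \<le> qf M v - \<beta> * ((A *v v) \<bullet> (A *v v))"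
      using assms(1) unfolding psd_def qf_diff_transpose_mult_self by blast
    moreover have "0 \<le> \<beta> * ((A *v v) \<bullet> (A *v v))" using assms(3) by simp
    ultimately show ?thesis by linarith
  qed
  with assms(2) show ?thesis unfolding psd_def by blast
qed

lemma pd_qf_nonneg: "pd H \<Longrightarrow> 0 \<le> qf H v"
  by (cases "v = 0") (auto simp: pd_def qf_def intro: less_imp_le)

lemma pd_matrix_inv:
  assumes "pd (H::real^'n^'n)"
  shows "H ** matrix_inv H = mat 1"
proof -
  have "\<forall>x. H *v x = 0 \<longrightarrow> x = 0"
    using assms by (auto simp: pd_def qf_def)
  then have "invertible H"
    using matrix_left_invertible_ker invertible_left_inverse by blast
  then have "\<exists>H'. H ** H' = mat 1 \<and> H' ** H = mat 1" by (simp add: invertible_def)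
  then have "H ** matrix_inv H = mat 1 \<and> matrix_inv H ** H = mat 1"
    unfolding matrix_inv_def by (rule someI_ex)
  then show ?thesis ..
qed

lemma qf_matrix_inv:
  assumes "pd H" shows "qf (matrix_inv H) d = qf H (matrix_inv H *v d)"
  by (simp add: qf_def matrix_vector_mul_assoc pd_matrix_inv[OF assms] inner_commute)

lemma pd_qf_matrix_inv_nonneg: "pd H \<Longrightarrow> 0 \<le> qf (matrix_inv H) d"
  by (simp add: qf_matrix_inv pd_qf_nonneg)

lemma inner_le_qf_young:
  assumes H: "pd H" and c: "c > 0"
  shows "d \<bullet> v \<le> c / 2 * qf H v + 1 / (2 * c) * qf (matrix_inv H) d"
proof -
  let ?u = "matrix_inv H *v d"
  have S: "symmetric_mat H" using H by (simp add: pd_def)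
  have Hu: "H *v ?u = d" by (simp add: matrix_vector_mul_assoc pd_matrix_inv[OF H])
  have "0 \<le> qf H (c *\<^sub>R v - ?u)" by (rule pd_qf_nonneg[OF H])
  also have "\<dots> = c\<^sup>2 * qf H v - 2 * c * (d \<bullet> v) + qf (matrix_inv H) d"
    using symmetric_mat_inner_commute[OF S, of v ?u]
    by (simp add: qf_diff[OF S] qf_scaleR qf_matrix_inv[OF H] matrix_vector_mult_scaleR Hu inner_commute)
  finally have "2 * c * (d \<bullet> v) \<le> c\<^sup>2 * qf H v + qf (matrix_inv H) d" by simp
  then show ?thesis using c by (simp add: field_simps power2_eq_square)
qed

section \<open>Variational inequalities for convex minimizers\<close>

lemma nonneg_of_linear_quadratic_nonneg:
  fixes a c :: real
  assumes "\<And>t. 0 < t \<Longrightarrow> t \<le> 1 \<Longrightarrow> 0 \<le> t * a + t\<^sup>2 * c"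
  shows "0 \<le> a"
proof (rule ccontr)
  assume "\<not> 0 \<le> a"
  define K where "K = 2 * \<bar>c\<bar> + 1"
  define t where "t = min 1 (- a / K)"
  have K: "0 < K" by (simp add: K_def add_nonneg_pos)
  have "0 < - a / K" using \<open>\<not> 0 \<le> a\<close> K by (simp add: divide_neg_pos)
  then have "0 < t" "t \<le> 1" by (simp_all add: t_def)
  moreover have "t \<le> - a / K" by (simp add: t_def)
  then have "t * K \<le> (- a / K) * K" using K by (intro mult_right_mono) auto
  then have "t * K \<le> - a" using K by simp
  ultimately have t: "0 < t" "t \<le> 1" "t * K \<le> - a" by simp_all
  have "t * c \<le> t * \<bar>c\<bar>" using t by (simp add: mult_left_mono)
  moreover have "t * K = t + 2 * (t * \<bar>c\<bar>)" by (simp add: K_def algebra_simps)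
  moreover have "0 \<le> t * \<bar>c\<bar>" using t by simp
  ultimately have "a + t * c < 0" using t by linarith
  then have "t * (a + t * c) < 0" using t by (simp add: mult_pos_neg)
  with assms[OF t(1,2)] show False by (simp add: power2_eq_square algebra_simps)
qed

lemma prox_three_point:
  fixes H M :: "real^'n^'n"
  assumes SH: "symmetric_mat H" and SM: "symmetric_mat M" and X: "convex X"
    and u: "u \<in> X" and z: "z \<in> X"
    and opt: "\<forall>z\<in>X. p \<bullet> u + \<gamma> / 2 * qf H (u - a) + 1 / 2 * qf M (u - b)
                     \<le> p \<bullet> z + \<gamma> / 2 * qf H (z - a) + 1 / 2 * qf M (z - b)"
  shows "p \<bullet> u + \<gamma> / 2 * qf H (u - a) + 1 / 2 * qf M (u - b) + \<gamma> / 2 * qf H (z - u) + 1 / 2 * qf M (z - u)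
         \<le> p \<bullet> z + \<gamma> / 2 * qf H (z - a) + 1 / 2 * qf M (z - b)"
proof -
  define obj where "obj w = p \<bullet> w + \<gamma> / 2 * qf H (w - a) + 1 / 2 * qf M (w - b)" for w
  define slope where "slope = p \<bullet> (z - u) + \<gamma> * ((u - a) \<bullet> (H *v (z - u))) + (u - b) \<bullet> (M *v (z - u))"
  define curv where "curv = \<gamma> / 2 * qf H (z - u) + 1 / 2 * qf M (z - u)"
  have along: "obj (u + t *\<^sub>R (z - u)) = obj u + t * slope + t\<^sup>2 * curv" for t
  proof -
    have v: "u + t *\<^sub>R (z - u) - a = (u - a) + t *\<^sub>R (z - u)"
      "u + t *\<^sub>R (z - u) - b = (u - b) + t *\<^sub>R (z - u)" by simp_all
    have eH: "qf H (u + t *\<^sub>R (z - u) - a) = qf H (u - a) + 2 * t * ((u - a) \<bullet> (H *v (z - u))) + t\<^sup>2 * qf H (z - u)"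
      unfolding v qf_add[OF SH] by (simp add: qf_scaleR matrix_vector_mult_scaleR)
    have eM: "qf M (u + t *\<^sub>R (z - u) - b) = qf M (u - b) + 2 * t * ((u - b) \<bullet> (M *v (z - u))) + t\<^sup>2 * qf M (z - u)"
      unfolding v qf_add[OF SM] by (simp add: qf_scaleR matrix_vector_mult_scaleR)
    show ?thesis
      unfolding obj_def slope_def curv_def eH eM by (simp add: inner_add_right algebra_simps)
  qed
  have "0 \<le> t * slope + t\<^sup>2 * curv" if "0 < t" "t \<le> 1" for t
  proof -
    have "u + t *\<^sub>R (z - u) = (1 - t) *\<^sub>R u + t *\<^sub>R z" by (simp add: algebra_simps)
    then have "u + t *\<^sub>R (z - u) \<in> X" using X u z that by (simp add: convex_def)
    then have "obj u \<le> obj (u + t *\<^sub>R (z - u))" using opt unfolding obj_def by blast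
    then show ?thesis using along[of t] by simp
  qed
  then have "0 \<le> slope" by (rule nonneg_of_linear_quadratic_nonneg)
  moreover have "obj z = obj u + slope + curv" using along[of 1] by simp
  ultimately show ?thesis unfolding obj_def curv_def by simp
qed

section \<open>Smooth convex functions\<close>

lemma has_real_derivative_along_line:
  fixes f :: "real^'n \<Rightarrow> real"
  assumes "(f has_derivative (\<lambda>h. G \<bullet> h)) (at (b + t *\<^sub>R v))"
  shows "((\<lambda>s. f (b + s *\<^sub>R v)) has_real_derivative (G \<bullet> v)) (at t)"
proof -
  have "((\<lambda>s. b + s *\<^sub>R v) has_derivative (\<lambda>h. h *\<^sub>R v)) (at t)"
    by (auto intro!: derivative_eq_intros)
  from has_derivative_compose[OF this assms]
  have "((\<lambda>s. f (b + s *\<^sub>R v)) has_derivative (\<lambda>h. (G \<bullet> v) * h)) (at t)"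
    by (simp add: mult.commute)
  then show ?thesis by (simp add: has_field_derivative_def)
qed

lemma lipschitz_gradient_inner_le:
  assumes H: "pd H" and \<nu>: "\<nu> > 0"
    and lip: "sqrt (qf (matrix_inv H) (gr a - gr b)) \<le> \<nu> * sqrt (qf H (a - b))"
  shows "(gr a - gr b) \<bullet> (a - b) \<le> \<nu> * qf H (a - b)"
proof -
  have "(sqrt (qf (matrix_inv H) (gr a - gr b)))\<^sup>2 \<le> (\<nu> * sqrt (qf H (a - b)))\<^sup>2"
    using lip by (rule power_mono) (simp add: pd_qf_matrix_inv_nonneg[OF H])
  then have Q: "qf (matrix_inv H) (gr a - gr b) \<le> \<nu>\<^sup>2 * qf H (a - b)"
    using pd_qf_matrix_inv_nonneg[OF H] pd_qf_nonneg[OF H] by (simp add: power_mult_distrib)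
  have "(gr a - gr b) \<bullet> (a - b) \<le> \<nu> / 2 * qf H (a - b) + 1 / (2 * \<nu>) * qf (matrix_inv H) (gr a - gr b)"
    by (rule inner_le_qf_young[OF H \<nu>])
  also have "\<dots> \<le> \<nu> / 2 * qf H (a - b) + 1 / (2 * \<nu>) * (\<nu>\<^sup>2 * qf H (a - b))"
    using Q \<nu> by (intro add_left_mono mult_left_mono) auto
  also have "\<dots> = \<nu> * qf H (a - b)" using \<nu> by (simp add: field_simps power2_eq_square)
  finally show ?thesis .
qed

lemma smooth_descent_inequality:
  fixes f :: "real^'n \<Rightarrow> real" and gr :: "real^'n \<Rightarrow> real^'n"
  assumes X: "convex X" "X \<subseteq> U"
    and diff: "\<forall>z\<in>U. (f has_derivative (\<lambda>h. gr z \<bullet> h)) (at z)"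
    and H: "pd H" and \<nu>: "\<nu> > 0"
    and lip: "\<forall>x1\<in>X. \<forall>x2\<in>X. sqrt (qf (matrix_inv H) (gr x1 - gr x2)) \<le> \<nu> * sqrt (qf H (x1 - x2))"
    and a: "a \<in> X" and b: "b \<in> X"
  shows "f a \<le> f b + gr b \<bullet> (a - b) + \<nu> / 2 * qf H (a - b)"
proof -
  define v where "v = a - b"
  define P where "P = qf H v"
  define \<phi> where "\<phi> t = f (b + t *\<^sub>R v) - t * (gr b \<bullet> v) - \<nu> * P * t\<^sup>2 / 2" for t
  have "\<phi> 1 \<le> \<phi> 0"
  proof (rule DERIV_nonpos_imp_nonincreasing[of 0 1 \<phi>])
    fix t :: real assume t: "0 \<le> t" "t \<le> 1"
    define z where "z = b + t *\<^sub>R v"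
    have "z = (1 - t) *\<^sub>R b + t *\<^sub>R a" by (simp add: z_def v_def algebra_simps)
    then have zX: "z \<in> X" using X a b t by (simp add: convex_def)
    have d: "((\<lambda>s. f (b + s *\<^sub>R v)) has_real_derivative (gr z \<bullet> v)) (at t)"
      using has_real_derivative_along_line[of f "gr z" b t v] diff zX X unfolding z_def by blast
    have "(\<phi> has_real_derivative (gr z \<bullet> v - gr b \<bullet> v - \<nu> * P * t)) (at t)"
      unfolding \<phi>_def by (rule derivative_eq_intros d refl | simp)+
    moreover have "t * ((gr z - gr b) \<bullet> v) \<le> t * (\<nu> * P * t)"
      using lipschitz_gradient_inner_le[OF H \<nu> lip[rule_format, OF zX b]]
      by (simp add: z_def P_def qf_scaleR power2_eq_square algebra_simps)
    then have "(gr z - gr b) \<bullet> v \<le> \<nu> * P * t"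
      using t by (cases "t = 0") (auto simp: z_def)
    ultimately show "\<exists>y. (\<phi> has_real_derivative y) (at t) \<and> y \<le> 0"
      by (intro exI[of _ "gr z \<bullet> v - gr b \<bullet> v - \<nu> * P * t"]) (auto simp: inner_diff_left)
  qed simp
  then show ?thesis unfolding \<phi>_def v_def P_def by simp
qed

lemma convex_on_gradient_inequality:
  fixes f :: "real^'n \<Rightarrow> real" and gr :: "real^'n \<Rightarrow> real^'n"
  assumes "X \<subseteq> U" and diff: "\<forall>z\<in>U. (f has_derivative (\<lambda>h. gr z \<bullet> h)) (at z)"
    and cvx: "convex_on X f" and x: "x \<in> X" and z: "z \<in> X"
  shows "f x + gr x \<bullet> (z - x) \<le> f z"
proof -
  define v where "v = z - x"
  define \<psi> where "\<psi> t = f (x + t *\<^sub>R v)" for t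
  have "(\<psi> has_real_derivative (gr x \<bullet> v)) (at 0)"
    unfolding \<psi>_def using has_real_derivative_along_line[of f "gr x" x 0 v] diff x assms(1) by auto
  then have "(\<psi> has_real_derivative (gr x \<bullet> v)) (at 0 within {0<..})"
    by (rule has_field_derivative_at_within)
  then have lim: "((\<lambda>y. (\<psi> y - \<psi> 0) / (y - 0)) \<longlongrightarrow> gr x \<bullet> v) (at_right 0)"
    by (simp add: has_field_derivative_iff)
  have "eventually (\<lambda>y. (\<psi> y - \<psi> 0) / (y - 0) \<le> \<psi> 1 - \<psi> 0) (at_right (0::real))"
  proof (rule eventually_mono)
    show "eventually (\<lambda>y. y \<in> {0<..<1}) (at_right (0::real))"
      by (rule eventually_at_right_real) simp
  next
    fix y :: real assume y: "y \<in> {0<..<1}"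
    have "x + y *\<^sub>R v = (1 - y) *\<^sub>R x + y *\<^sub>R z" by (simp add: v_def algebra_simps)
    then have "\<psi> y \<le> (1 - y) * \<psi> 0 + y * \<psi> 1"
      using convex_onD[OF cvx, of y x z] x z y by (simp add: \<psi>_def v_def)
    then have "\<psi> y - \<psi> 0 \<le> y * (\<psi> 1 - \<psi> 0)" by (simp add: algebra_simps)
    then show "(\<psi> y - \<psi> 0) / (y - 0) \<le> \<psi> 1 - \<psi> 0"
      using y by (simp add: divide_le_eq mult.commute)
  qed
  from tendsto_le[OF trivial_limit_at_right_real tendsto_const lim this]
  show ?thesis by (simp add: \<psi>_def v_def)
qed

lemma favg_gavg_le:
  assumes N: "N \<ge> 1" and h: "\<forall>j\<in>{1..N}. fj j p + gradj j q \<bullet> v \<le> fj j r + e"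
  shows "favg N fj p + gavg N gradj q \<bullet> v \<le> favg N fj r + e"
proof -
  have "(\<Sum>j=1..N. fj j p + gradj j q \<bullet> v) \<le> (\<Sum>j=1..N. fj j r + e)"
    using h by (intro sum_mono) auto
  then have "(\<Sum>j=1..N. fj j p) + (\<Sum>j=1..N. gradj j q \<bullet> v) \<le> (\<Sum>j=1..N. fj j r) + real N * e"
    by (simp add: sum.distrib)
  then have "(1 / real N) * ((\<Sum>j=1..N. fj j p) + (\<Sum>j=1..N. gradj j q \<bullet> v))
      \<le> (1 / real N) * ((\<Sum>j=1..N. fj j r) + real N * e)"
    using N by (intro mult_left_mono) auto
  moreover have "gavg N gradj q \<bullet> v = (1 / real N) * (\<Sum>j=1..N. gradj j q \<bullet> v)"
    by (simp add: gavg_def inner_sum_left)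
  ultimately show ?thesis using N unfolding favg_def by (simp add: distrib_left)
qed

lemma favg_descent_inequality:
  fixes fj :: "nat \<Rightarrow> real^'n \<Rightarrow> real"
  assumes N: "N \<ge> 1" and X: "convex X" "X \<subseteq> U"
    and diff: "\<forall>j\<in>{1..N}. \<forall>z\<in>U. (fj j has_derivative (\<lambda>h. gradj j z \<bullet> h)) (at z)"
    and H: "pd H" and \<nu>: "\<nu> > 0"
    and lip: "\<forall>j\<in>{1..N}. \<forall>x1\<in>X. \<forall>x2\<in>X.
               sqrt (qf (matrix_inv H) (gradj j x1 - gradj j x2)) \<le> \<nu> * sqrt (qf H (x1 - x2))"
    and a: "a \<in> X" and b: "b \<in> X"
  shows "favg N fj a \<le> favg N fj b + gavg N gradj b \<bullet> (a - b) + \<nu> / 2 * qf H (a - b)"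
proof -
  have "\<forall>j\<in>{1..N}. fj j a + gradj j b \<bullet> (b - a) \<le> fj j b + \<nu> / 2 * qf H (a - b)"
    using smooth_descent_inequality[OF X _ H \<nu> _ a b] diff lip by (fastforce simp: inner_diff_right)
  from favg_gavg_le[OF N, of fj a gradj b "b - a" b, OF this]
  show ?thesis by (simp add: inner_diff_right)
qed

lemma favg_gradient_inequality:
  fixes fj :: "nat \<Rightarrow> real^'n \<Rightarrow> real"
  assumes N: "N \<ge> 1" and "X \<subseteq> U"
    and diff: "\<forall>j\<in>{1..N}. \<forall>z\<in>U. (fj j has_derivative (\<lambda>h. gradj j z \<bullet> h)) (at z)"
    and cvx: "\<forall>j\<in>{1..N}. convex_on X (fj j)"
    and a: "a \<in> X" and b: "b \<in> X"
  shows "favg N fj a + gavg N gradj a \<bullet> (b - a) \<le> favg N fj b"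
  using favg_gavg_le[OF N, of fj a gradj a "b - a" b 0]
    convex_on_gradient_inequality[OF assms(2) _ _ a b] diff cvx by simp

section \<open>The stochastic accelerated x-subproblem\<close>

lemma accelerated_descent_estimate:
  fixes F :: "real^'n \<Rightarrow> real" and Gr :: "real^'n \<Rightarrow> real^'n"
  assumes X: "convex X"
    and desc: "\<forall>a\<in>X. \<forall>b\<in>X. F a \<le> F b + Gr b \<bullet> (a - b) + \<nu> / 2 * qf H (a - b)"
    and grad: "\<forall>a\<in>X. \<forall>b\<in>X. F a + Gr a \<bullet> (b - a) \<le> F b"
    and \<beta>: "0 \<le> \<beta>" "\<beta> \<le> 1" and mem: "x \<in> X" "b \<in> X" "b1 \<in> X" "z \<in> X"
    and xh: "xh = \<beta> *\<^sub>R b + (1 - \<beta>) *\<^sub>R x"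
    and x1: "x1 = \<beta> *\<^sub>R b1 + (1 - \<beta>) *\<^sub>R x"
  shows "F x1 \<le> (1 - \<beta>) * F x + \<beta> * F z + \<beta> * (Gr xh \<bullet> (b1 - z)) + \<nu> / 2 * \<beta>\<^sup>2 * qf H (b1 - b)"
proof -
  have xhX: "xh \<in> X" and x1X: "x1 \<in> X" unfolding xh x1 using X \<beta> mem by (auto intro: convexD)
  have "x1 - xh = \<beta> *\<^sub>R (b1 - b)" unfolding xh x1 by (simp add: algebra_simps)
  then have "qf H (x1 - xh) = \<beta>\<^sup>2 * qf H (b1 - b)" by (simp add: qf_scaleR)
  then have "F x1 \<le> F xh + Gr xh \<bullet> (x1 - xh) + \<nu> / 2 * \<beta>\<^sup>2 * qf H (b1 - b)"
    using desc x1X xhX by force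
  also have "Gr xh \<bullet> (x1 - xh) = (1 - \<beta>) * (Gr xh \<bullet> (x - xh)) + \<beta> * (Gr xh \<bullet> (z - xh)) + \<beta> * (Gr xh \<bullet> (b1 - z))"
    unfolding x1 by (simp add: inner_diff_right algebra_simps)
  also have "F xh + ((1 - \<beta>) * (Gr xh \<bullet> (x - xh)) + \<beta> * (Gr xh \<bullet> (z - xh)) + \<beta> * (Gr xh \<bullet> (b1 - z)))
      = (1 - \<beta>) * (F xh + Gr xh \<bullet> (x - xh)) + \<beta> * (F xh + Gr xh \<bullet> (z - xh)) + \<beta> * (Gr xh \<bullet> (b1 - z))"
    by (simp add: algebra_simps)
  also have "\<dots> \<le> (1 - \<beta>) * F x + \<beta> * F z + \<beta> * (Gr xh \<bullet> (b1 - z))"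
    using grad xhX mem \<beta> by (intro add_mono mult_left_mono) auto
  finally show ?thesis by simp
qed

definition xsub_objective :: "(real^'n \<Rightarrow> real) \<Rightarrow> real^'n \<Rightarrow> real^'n^'n \<Rightarrow> real^'n \<Rightarrow> real^'n \<Rightarrow> real" where
  "xsub_objective F h M xk u = F u + h \<bullet> u + 1/2 * qf M (u - xk)"

lemma accelerated_objective_step:
  fixes F :: "real^'n \<Rightarrow> real" and Gr :: "real^'n \<Rightarrow> real^'n" and H M :: "real^'n^'n"
    and h xk :: "real^'n" and \<beta> \<nu> :: real
  defines "\<Phi> \<equiv> xsub_objective F h M xk"
  assumes X: "convex X"
    and desc: "\<forall>a\<in>X. \<forall>b\<in>X. F a \<le> F b + Gr b \<bullet> (a - b) + \<nu> / 2 * qf H (a - b)"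
    and grad: "\<forall>a\<in>X. \<forall>b\<in>X. F a + Gr a \<bullet> (b - a) \<le> F b"
    and M: "psd M" and \<beta>: "0 \<le> \<beta>" "\<beta> \<le> 1" and mem: "x \<in> X" "b \<in> X" "b1 \<in> X" "z \<in> X"
    and xh: "xh = \<beta> *\<^sub>R b + (1 - \<beta>) *\<^sub>R x"
    and x1: "x1 = \<beta> *\<^sub>R b1 + (1 - \<beta>) *\<^sub>R x"
  shows "\<Phi> x1 - \<Phi> z + 1/2 * qf M (z - x1)
      \<le> (1 - \<beta>) * (\<Phi> x - \<Phi> z + 1/2 * qf M (z - x)) + \<nu> / 2 * \<beta>\<^sup>2 * qf H (b1 - b)
        + \<beta> * (Gr xh \<bullet> (b1 - z) + h \<bullet> b1 - h \<bullet> z + 1/2 * qf M (b1 - xk) - 1/2 * qf M (z - xk)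
               + 1/2 * qf M (z - b1))"
proof -
  have F: "F x1 \<le> (1 - \<beta>) * F x + \<beta> * F z + \<beta> * (Gr xh \<bullet> (b1 - z)) + \<nu> / 2 * \<beta>\<^sup>2 * qf H (b1 - b)"
    by (rule accelerated_descent_estimate[OF X desc grad \<beta> mem xh x1])
  have lin: "h \<bullet> x1 = (1 - \<beta>) * (h \<bullet> x) + \<beta> * (h \<bullet> b1)"
    unfolding x1 by (simp add: inner_add_right)
  have "x1 - xk = \<beta> *\<^sub>R (b1 - xk) + (1 - \<beta>) *\<^sub>R (x - xk)"
    unfolding x1 by (simp add: algebra_simps)
  then have prox: "1/2 * qf M (x1 - xk) \<le> \<beta>/2 * qf M (b1 - xk) + (1 - \<beta>)/2 * qf M (x - xk)"
    using psd_qf_convex[OF M, of \<beta> "b1 - xk" "x - xk"] \<beta> by simp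
  have "z - x1 = \<beta> *\<^sub>R (z - b1) + (1 - \<beta>) *\<^sub>R (z - x)"
    unfolding x1 by (simp add: algebra_simps)
  then have gap: "1/2 * qf M (z - x1) \<le> \<beta>/2 * qf M (z - b1) + (1 - \<beta>)/2 * qf M (z - x)"
    using psd_qf_convex[OF M, of \<beta> "z - b1" "z - x"] \<beta> by simp
  have "\<Phi> x1 - \<Phi> z + 1/2 * qf M (z - x1)
      \<le> (1 - \<beta>) * F x + \<beta> * F z + \<beta> * (Gr xh \<bullet> (b1 - z)) + \<nu> / 2 * \<beta>\<^sup>2 * qf H (b1 - b)
        + ((1 - \<beta>) * (h \<bullet> x) + \<beta> * (h \<bullet> b1))
        + (\<beta>/2 * qf M (b1 - xk) + (1 - \<beta>)/2 * qf M (x - xk)) - \<Phi> z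
        + (\<beta>/2 * qf M (z - b1) + (1 - \<beta>)/2 * qf M (z - x))"
    using F lin prox gap unfolding \<Phi>_def xsub_objective_def by linarith
  also have "\<dots> = (1 - \<beta>) * (\<Phi> x - \<Phi> z + 1/2 * qf M (z - x)) + \<nu> / 2 * \<beta>\<^sup>2 * qf H (b1 - b)
        + \<beta> * (Gr xh \<bullet> (b1 - z) + h \<bullet> b1 - h \<bullet> z + 1/2 * qf M (b1 - xk) - 1/2 * qf M (z - xk)
               + 1/2 * qf M (z - b1))"
    unfolding \<Phi>_def xsub_objective_def by (simp add: field_simps)
  finally show ?thesis .
qed

lemma accelerated_prox_step_contraction:
  fixes F :: "real^'n \<Rightarrow> real" and Gr :: "real^'n \<Rightarrow> real^'n" and H M :: "real^'n^'n"
    and h xk d xh :: "real^'n" and \<beta> \<gamma> c \<nu> :: real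
  defines "\<Phi> \<equiv> xsub_objective F h M xk" and "\<delta> \<equiv> Gr xh - d"
  assumes X: "convex X"
    and desc: "\<forall>a\<in>X. \<forall>b\<in>X. F a \<le> F b + Gr b \<bullet> (a - b) + \<nu> / 2 * qf H (a - b)"
    and grad: "\<forall>a\<in>X. \<forall>b\<in>X. F a + Gr a \<bullet> (b - a) \<le> F b"
    and H: "pd H" and M: "psd M" and \<beta>: "0 < \<beta>" "\<beta> \<le> 1"
    and c: "0 < c" "c \<le> \<beta> * \<gamma> - \<nu> * \<beta>\<^sup>2"
    and mem: "x \<in> X" "b \<in> X" "b1 \<in> X" "z \<in> X"
    and xh: "xh = \<beta> *\<^sub>R b + (1 - \<beta>) *\<^sub>R x"
    and x1: "x1 = \<beta> *\<^sub>R b1 + (1 - \<beta>) *\<^sub>R x"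
    and opt: "\<forall>z\<in>X. (d + h) \<bullet> b1 + \<gamma> / 2 * qf H (b1 - b) + 1 / 2 * qf M (b1 - xk)
                  \<le> (d + h) \<bullet> z + \<gamma> / 2 * qf H (z - b) + 1 / 2 * qf M (z - xk)"
  shows "\<Phi> x1 - \<Phi> z + 1/2 * qf M (z - x1) + \<beta> * \<gamma> / 2 * qf H (z - b1)
      \<le> (1 - \<beta>) * (\<Phi> x - \<Phi> z + 1/2 * qf M (z - x)) + \<beta> * \<gamma> / 2 * qf H (z - b) + \<beta> * (\<delta> \<bullet> (b - z))
        + \<beta>\<^sup>2 / (2 * c) * qf (matrix_inv H) \<delta>"
proof -
  define qD where "qD = qf H (b1 - b)"
  have qD: "0 \<le> qD" unfolding qD_def by (rule pd_qf_nonneg[OF H])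
  have SH: "symmetric_mat H" and SM: "symmetric_mat M"
    using H M by (simp_all add: pd_def psd_def)
  have three: "d \<bullet> (b1 - z) + h \<bullet> b1 - h \<bullet> z + 1/2 * qf M (b1 - xk) - 1/2 * qf M (z - xk) + 1/2 * qf M (z - b1)
      + \<gamma> / 2 * qf H (z - b1) \<le> \<gamma> / 2 * qf H (z - b) - \<gamma> / 2 * qD"
    using prox_three_point[OF SH SM X mem(3,4) opt] by (simp add: qD_def inner_add_left inner_diff_right)
  have young: "\<beta> * (\<delta> \<bullet> (b1 - b)) \<le> c / 2 * qD + \<beta>\<^sup>2 / (2 * c) * qf (matrix_inv H) \<delta>"
    using inner_le_qf_young[OF H, of "c / \<beta>" \<delta> "b1 - b"] \<beta> c
    by (simp add: qD_def divide_simps power2_eq_square mult.commute mult.left_commute)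
  have "\<Phi> x1 - \<Phi> z + 1/2 * qf M (z - x1) + \<beta> * \<gamma> / 2 * qf H (z - b1)
      \<le> (1 - \<beta>) * (\<Phi> x - \<Phi> z + 1/2 * qf M (z - x)) + \<nu> / 2 * \<beta>\<^sup>2 * qD
        + \<beta> * (Gr xh \<bullet> (b1 - z) + h \<bullet> b1 - h \<bullet> z + 1/2 * qf M (b1 - xk) - 1/2 * qf M (z - xk)
               + 1/2 * qf M (z - b1) + \<gamma> / 2 * qf H (z - b1))"
    using accelerated_objective_step[OF X desc grad M _ _ mem xh x1] \<beta>
    unfolding \<Phi>_def qD_def by (simp add: algebra_simps)
  also have "Gr xh \<bullet> (b1 - z) = d \<bullet> (b1 - z) + \<delta> \<bullet> (b1 - b) + \<delta> \<bullet> (b - z)"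
    unfolding \<delta>_def by (simp add: inner_diff_left inner_diff_right)
  also have "\<beta> * (d \<bullet> (b1 - z) + \<delta> \<bullet> (b1 - b) + \<delta> \<bullet> (b - z) + h \<bullet> b1 - h \<bullet> z + 1/2 * qf M (b1 - xk)
      - 1/2 * qf M (z - xk) + 1/2 * qf M (z - b1) + \<gamma> / 2 * qf H (z - b1))
      \<le> \<beta> * (\<delta> \<bullet> (b1 - b) + \<delta> \<bullet> (b - z) + \<gamma> / 2 * qf H (z - b) - \<gamma> / 2 * qD)"
    using three \<beta> by (intro mult_left_mono) auto
  also have "(1 - \<beta>) * (\<Phi> x - \<Phi> z + 1/2 * qf M (z - x)) + \<nu> / 2 * \<beta>\<^sup>2 * qD
      + \<beta> * (\<delta> \<bullet> (b1 - b) + \<delta> \<bullet> (b - z) + \<gamma> / 2 * qf H (z - b) - \<gamma> / 2 * qD)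
      = (1 - \<beta>) * (\<Phi> x - \<Phi> z + 1/2 * qf M (z - x)) + \<beta> * \<gamma> / 2 * qf H (z - b) + \<beta> * (\<delta> \<bullet> (b - z))
        + \<beta> * (\<delta> \<bullet> (b1 - b)) - (\<beta> * \<gamma> - \<nu> * \<beta>\<^sup>2) / 2 * qD"
    by (simp add: field_simps)
  also have "\<dots> \<le> (1 - \<beta>) * (\<Phi> x - \<Phi> z + 1/2 * qf M (z - x)) + \<beta> * \<gamma> / 2 * qf H (z - b)
        + \<beta> * (\<delta> \<bullet> (b - z)) + \<beta>\<^sup>2 / (2 * c) * qf (matrix_inv H) \<delta>"
    using young mult_right_mono[OF c(2) qD] by simp
  finally show ?thesis by simp
qed

lemma xsub_inner_step:
  fixes F :: "real^'n \<Rightarrow> real" and Gr :: "real^'n \<Rightarrow> real^'n" and H M :: "real^'n^'n"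
    and h xk d :: "real^'n" and T \<eta> \<nu> :: real
  defines "\<Phi> \<equiv> xsub_objective F h M xk"
  assumes X: "convex X"
    and desc: "\<forall>a\<in>X. \<forall>b\<in>X. F a \<le> F b + Gr b \<bullet> (a - b) + \<nu> / 2 * qf H (a - b)"
    and grad: "\<forall>a\<in>X. \<forall>b\<in>X. F a + Gr a \<bullet> (b - a) \<le> F b"
    and H: "pd H" and M: "psd M" and \<nu>: "\<nu> > 0" and \<eta>: "\<eta> > 0" "\<eta> * \<nu> < 1" and T: "T \<ge> 1"
    and mem: "x \<in> X" "b \<in> X" "b1 \<in> X" "z \<in> X"
    and xh: "xh = (2/(T+1)) *\<^sub>R b + (1 - 2/(T+1)) *\<^sub>R x"
    and x1: "x1 = (2/(T+1)) *\<^sub>R b1 + (1 - 2/(T+1)) *\<^sub>R x"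
    and opt: "\<forall>z\<in>X. (d + h) \<bullet> b1 + (2/(T*\<eta>)) / 2 * qf H (b1 - b) + 1 / 2 * qf M (b1 - xk)
                  \<le> (d + h) \<bullet> z + (2/(T*\<eta>)) / 2 * qf H (z - b) + 1 / 2 * qf M (z - xk)"
  shows "T*(T+1) * (\<Phi> x1 - \<Phi> z + 1/2 * qf M (z - x1)) + 2/\<eta> * qf H (z - b1)
      \<le> T*(T-1) * (\<Phi> x - \<Phi> z + 1/2 * qf M (z - x)) + 2/\<eta> * qf H (z - b)
         + 2*T * ((Gr xh - d) \<bullet> (b - z)) + T\<^sup>2*\<eta>/(2*(1-\<eta>*\<nu>)) * qf (matrix_inv H) (Gr xh - d)"
proof -
  define \<beta> where "\<beta> = 2/(T+1)"
  define \<gamma> where "\<gamma> = 2/(T*\<eta>)"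
  define c where "c = 4*(1-\<eta>*\<nu>)/(T*(T+1)*\<eta>)"
  have pos: "T > 0" "T + 1 > 0" "1 - \<eta>*\<nu> > 0" using T \<eta> by auto
  have \<beta>01: "0 < \<beta>" "\<beta> \<le> 1" using T by (auto simp: \<beta>_def)
  \<comment> \<open>The Young constant \<open>c\<close> is chosen so that the last coefficient is exactly \<open>T\<^sup>2\<eta>/(2(1-\<eta>\<nu>))\<close>.\<close>
  have c: "0 < c" "c \<le> \<beta>*\<gamma> - \<nu>*\<beta>\<^sup>2"
  proof -
    show "0 < c" using pos \<eta> by (simp add: c_def)
    have "\<beta>*\<gamma> - \<nu>*\<beta>\<^sup>2 - c = 4*\<nu>/(T*(T+1)) - 4*\<nu>/(T+1)\<^sup>2"
      using pos \<eta> by (simp add: \<beta>_def \<gamma>_def c_def divide_simps power2_eq_square) (simp add: algebra_simps)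
    moreover have "4*\<nu>/(T+1)\<^sup>2 \<le> 4*\<nu>/(T*(T+1))"
      using T \<nu> by (intro divide_left_mono) (auto simp: power2_eq_square)
    ultimately show "c \<le> \<beta>*\<gamma> - \<nu>*\<beta>\<^sup>2" by simp
  qed
  have contract: "\<Phi> x1 - \<Phi> z + 1/2 * qf M (z - x1) + \<beta>*\<gamma>/2 * qf H (z - b1)
      \<le> (1 - \<beta>) * (\<Phi> x - \<Phi> z + 1/2 * qf M (z - x)) + \<beta>*\<gamma>/2 * qf H (z - b) + \<beta> * ((Gr xh - d) \<bullet> (b - z))
        + \<beta>\<^sup>2/(2*c) * qf (matrix_inv H) (Gr xh - d)"
    unfolding \<Phi>_def using opt
    by (intro accelerated_prox_step_contraction[OF X desc grad H M \<beta>01 c mem])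
       (simp_all add: xh x1 \<beta>_def \<gamma>_def)
  have coeffs: "T*(T+1) * (1 - \<beta>) = T*(T-1)" "T*(T+1) * (\<beta>*\<gamma>/2) = 2/\<eta>" "T*(T+1) * \<beta> = 2*T"
      "T*(T+1) * (\<beta>\<^sup>2/(2*c)) = T\<^sup>2*\<eta>/(2*(1-\<eta>*\<nu>))"
    using pos \<eta> by (simp_all add: \<beta>_def \<gamma>_def c_def divide_simps power2_eq_square)
  have scale: "k * (a + u * b) \<le> k * (p * P + u * Q + r * R + v * S)
      \<Longrightarrow> k * a + (k * u) * b \<le> (k * p) * P + (k * u) * Q + (k * r) * R + (k * v) * S"
    for k a u b p P Q r R v S :: real
    by (simp add: algebra_simps)
  have "0 \<le> T*(T+1)" using pos by simp
  from scale[OF mult_left_mono[OF contract this]] show ?thesis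
    unfolding coeffs by simp
qed

lemma telescoping_le:
  fixes a r :: "nat \<Rightarrow> real"
  assumes "\<And>t. 1 \<le> t \<Longrightarrow> t \<le> m \<Longrightarrow> a (t + 1) \<le> a t + r t"
  shows "a (m + 1) \<le> a 1 + (\<Sum>t = 1..m. r t)"
  using assms
proof (induction m)
  case (Suc m)
  have "a (m + 1) \<le> a 1 + (\<Sum>t = 1..m. r t)" using Suc by simp
  moreover have "a (Suc m + 1) \<le> a (Suc m) + r (Suc m)" using Suc.prems by simp
  ultimately show ?case by simp
qed simp

lemma xsub_iterates_in:
  assumes X: "convex X" and init: "xi 1 \<in> X" "bxi 1 \<in> X"
    and step: "\<forall>t. 1 \<le> t \<and> t \<le> m \<longrightarrow> bxi (t+1) \<in> X \<and>
                   xi (t+1) = (2/(real t+1)) *\<^sub>R bxi (t+1) + (1 - 2/(real t+1)) *\<^sub>R xi t"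
  shows "n \<le> m \<Longrightarrow> xi (n + 1) \<in> X \<and> bxi (n + 1) \<in> X"
proof (induction n)
  case (Suc n)
  then have "bxi (Suc n + 1) \<in> X"
    and "xi (Suc n + 1) = (2/(real n+2)) *\<^sub>R bxi (Suc n + 1) + (1 - 2/(real n+2)) *\<^sub>R xi (n + 1)"
    using step by (auto simp: add_ac)
  moreover have "0 \<le> 2/(real n+2)" "2/(real n+2) \<le> 1" by auto
  ultimately show ?case using Suc by (auto intro: convexD[OF X])
qed (use init in simp)

lemma scaled_neg_zeta_eq:
  assumes "m \<ge> 1" "\<eta> > 0" "\<eta> * \<nu> < 1"
  shows "real m * (real m + 1) * - zeta H \<nu> \<eta> m bo bn bs \<delta> z
    = 2/\<eta> * (qf H (z - bo) - qf H (z - bn)) + 2 * (\<Sum>t = 1..m. real t * (\<delta> t \<bullet> (bs t - z)))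
      + \<eta> / (2 * (1 - \<eta> * \<nu>)) * (\<Sum>t = 1..m. (real t)\<^sup>2 * qf (matrix_inv H) (\<delta> t))"
proof -
  have "K * - (2 / K * (1/\<eta> * (Dn - Do) - S1 - \<eta> / (4 * (1 - \<eta> * \<nu>)) * S2))
      = 2/\<eta> * (Do - Dn) + 2 * S1 + \<eta> / (2 * (1 - \<eta> * \<nu>)) * S2" if "K > 0" for K Dn Do S1 S2 :: real
    using that assms(2,3) by (simp add: field_simps)
  from this[of "real m * (real m + 1)"] show ?thesis using assms(1) by (simp add: zeta_def)
qed

lemma xsub_estimate:
  fixes F :: "real^'n \<Rightarrow> real" and Gr :: "real^'n \<Rightarrow> real^'n" and H M :: "real^'n^'n"
    and h xk z :: "real^'n" and xi bxi xh d :: "nat \<Rightarrow> real^'n" and \<eta> \<nu> :: real and m :: nat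
  defines "\<Phi> \<equiv> xsub_objective F h M xk"
  assumes X: "convex X"
    and desc: "\<forall>a\<in>X. \<forall>b\<in>X. F a \<le> F b + Gr b \<bullet> (a - b) + \<nu> / 2 * qf H (a - b)"
    and grad: "\<forall>a\<in>X. \<forall>b\<in>X. F a + Gr a \<bullet> (b - a) \<le> F b"
    and H: "pd H" and M: "psd M" and \<nu>: "\<nu> > 0" and \<eta>: "\<eta> > 0" "\<eta> * \<nu> < 1"
    and init: "xi 1 \<in> X" "bxi 1 \<in> X"
    and step: "\<forall>t. 1 \<le> t \<and> t \<le> m \<longrightarrow>
        xh t = (2/(real t+1)) *\<^sub>R bxi t + (1 - 2/(real t+1)) *\<^sub>R xi t
      \<and> bxi (t+1) \<in> X
      \<and> (\<forall>z\<in>X. (d t + h) \<bullet> bxi (t+1) + (2/(real t*\<eta>)) / 2 * qf H (bxi (t+1) - bxi t) + 1 / 2 * qf M (bxi (t+1) - xk)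
                  \<le> (d t + h) \<bullet> z + (2/(real t*\<eta>)) / 2 * qf H (z - bxi t) + 1 / 2 * qf M (z - xk))
      \<and> xi (t+1) = (2/(real t+1)) *\<^sub>R bxi (t+1) + (1 - 2/(real t+1)) *\<^sub>R xi t"
    and z: "z \<in> X" and m: "m \<ge> 1"
  shows "\<Phi> (xi (m+1)) - \<Phi> z + 1/2 * qf M (z - xi (m+1))
          \<le> - zeta H \<nu> \<eta> m (bxi 1) (bxi (m+1)) bxi (\<lambda>t. Gr (xh t) - d t) z"
proof -
  define \<delta> where "\<delta> t = Gr (xh t) - d t" for t
  define \<Psi> where "\<Psi> t = \<Phi> (xi t) - \<Phi> z + 1/2 * qf M (z - xi t)" for t
  define r where "r t = 2 * real t * (\<delta> t \<bullet> (bxi t - z)) + (real t)\<^sup>2 * \<eta> / (2 * (1 - \<eta> * \<nu>)) * qf (matrix_inv H) (\<delta> t)" for t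
  \<comment> \<open>A Lyapunov function of the inner loop: it grows at most by \<open>r t\<close> per step.\<close>
  define V where "V t = real t * (real t - 1) * \<Psi> t + 2/\<eta> * qf H (z - bxi t)" for t
  have mem: "xi t \<in> X \<and> bxi t \<in> X" if "1 \<le> t" "t \<le> m + 1" for t
    using xsub_iterates_in[where xi = xi and bxi = bxi and m = m and n = "t - 1", OF X init] step that
    by auto
  have "V (t + 1) \<le> V t + r t" if t: "1 \<le> t" "t \<le> m" for t
  proof -
    have "real t * (real t + 1) * \<Psi> (t + 1) + 2/\<eta> * qf H (z - bxi (t + 1))
        \<le> real t * (real t - 1) * \<Psi> t + 2/\<eta> * qf H (z - bxi t)
          + 2 * real t * (\<delta> t \<bullet> (bxi t - z)) + (real t)\<^sup>2 * \<eta> / (2 * (1 - \<eta> * \<nu>)) * qf (matrix_inv H) (\<delta> t)"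
      unfolding \<Psi>_def \<delta>_def \<Phi>_def
      by (rule xsub_inner_step[OF X desc grad H M \<nu> \<eta>])
         (use t step mem[of t] mem[of "t + 1"] z in \<open>auto simp: algebra_simps\<close>)
    then show ?thesis by (simp add: V_def r_def algebra_simps)
  qed
  then have "V (m + 1) \<le> V 1 + (\<Sum>t = 1..m. r t)" by (rule telescoping_le)
  moreover have "(\<Sum>t = 1..m. r t) = 2 * (\<Sum>t = 1..m. real t * (\<delta> t \<bullet> (bxi t - z)))
      + \<eta> / (2 * (1 - \<eta> * \<nu>)) * (\<Sum>t = 1..m. (real t)\<^sup>2 * qf (matrix_inv H) (\<delta> t))"
    unfolding r_def sum.distrib sum_distrib_left by (simp add: mult_ac)
  ultimately have "real m * (real m + 1) * \<Psi> (m + 1)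
      \<le> 2/\<eta> * (qf H (z - bxi 1) - qf H (z - bxi (m + 1))) + 2 * (\<Sum>t = 1..m. real t * (\<delta> t \<bullet> (bxi t - z)))
        + \<eta> / (2 * (1 - \<eta> * \<nu>)) * (\<Sum>t = 1..m. (real t)\<^sup>2 * qf (matrix_inv H) (\<delta> t))"
    by (simp add: V_def algebra_simps)
  also have "\<dots> = real m * (real m + 1) * - zeta H \<nu> \<eta> m (bxi 1) (bxi (m+1)) bxi \<delta> z"
    by (rule scaled_neg_zeta_eq[symmetric, OF m \<eta>])
  finally have "real m * (real m + 1) * \<Psi> (m + 1)
      \<le> real m * (real m + 1) * - zeta H \<nu> \<eta> m (bxi 1) (bxi (m+1)) bxi \<delta> z" .
  then have "\<Psi> (m + 1) \<le> - zeta H \<nu> \<eta> m (bxi 1) (bxi (m+1)) bxi \<delta> z"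
    by (rule mult_left_le_imp_le) (use m in simp)
  then show ?thesis by (simp add: \<Psi>_def \<delta>_def[abs_def])
qed

section \<open>The y-subproblem\<close>

lemma augmented_quadratic_along_line:
  fixes A :: "real^'a^'c" and B :: "real^'b^'c" and L :: "real^'b^'b"
    and x :: "real^'a" and yk :: "real^'b" and b lh :: "real^'c" and \<beta> :: real
  assumes SL: "symmetric_mat L"
  defines "q \<equiv> \<lambda>y. - (lh \<bullet> (A *v x + B *v y - b)) + \<beta> / 2 * (norm (A *v x + B *v y - b))\<^sup>2
                    + 1 / 2 * qf L (y - yk)"
  shows "q (u + t *\<^sub>R v) = q u
    + t * (- (lh \<bullet> (B *v v)) + \<beta> * ((A *v x + B *v u - b) \<bullet> (B *v v)) + v \<bullet> (L *v (u - yk)))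
    + t\<^sup>2 * (\<beta> / 2 * ((B *v v) \<bullet> (B *v v)) + 1 / 2 * qf L v)"
proof -
  define r where "r = A *v x + B *v u - b"
  have res: "A *v x + B *v (u + t *\<^sub>R v) - b = r + t *\<^sub>R (B *v v)"
    unfolding r_def by (simp add: matrix_vector_right_distrib matrix_vector_mult_scaleR algebra_simps)
  have lin: "lh \<bullet> (r + t *\<^sub>R (B *v v)) = lh \<bullet> r + t * (lh \<bullet> (B *v v))"
    by (simp add: inner_add_right)
  have sq: "(norm (r + t *\<^sub>R (B *v v)))\<^sup>2 = (norm r)\<^sup>2 + 2 * t * (r \<bullet> (B *v v)) + t\<^sup>2 * ((B *v v) \<bullet> (B *v v))"
    unfolding power2_norm_eq_inner
    by (simp add: inner_add_left inner_add_right inner_commute power2_eq_square algebra_simps)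
  have prox: "qf L (u + t *\<^sub>R v - yk) = qf L (u - yk) + 2 * t * (v \<bullet> (L *v (u - yk))) + t\<^sup>2 * qf L v"
    using qf_add[OF SL, of "u - yk" "t *\<^sub>R v"] symmetric_mat_inner_commute[OF SL, of "u - yk"]
    by (simp add: qf_scaleR matrix_vector_mult_scaleR add_diff_eq[symmetric] diff_add_eq)
  have "- (l0 + t * l1) + \<beta> / 2 * (n0 + 2 * t * n1 + t\<^sup>2 * n2) + 1 / 2 * (p0 + 2 * t * p1 + t\<^sup>2 * p2)
      = (- l0 + \<beta> / 2 * n0 + 1 / 2 * p0) + t * (- l1 + \<beta> * n1 + p1) + t\<^sup>2 * (\<beta> / 2 * n2 + 1 / 2 * p2)"
    for l0 l1 n0 n1 n2 p0 p1 p2 :: real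
    by (simp add: algebra_simps)
  then show ?thesis unfolding q_def res lin sq prox r_def[symmetric] .
qed

lemma Lagr_plus_qf_eq:
  "Lagr F g A B b \<beta> x y lh + ereal (1 / 2 * qf L (y - yk))
    = ereal (F x) + g y + ereal (- (lh \<bullet> (A *v x + B *v y - b)) + \<beta> / 2 * (norm (A *v x + B *v y - b))\<^sup>2
                                  + 1 / 2 * qf L (y - yk))"
  unfolding Lagr_def by (simp add: add.assoc)

lemma y_step_finite:
  assumes g: "proper_convex_on Y g" and y1: "y1 \<in> Y"
    and opt: "\<forall>z\<in>Y. Lagr F g A B b \<beta> x1 y1 lh + ereal (1 / 2 * qf L (y1 - yk))
                   \<le> Lagr F g A B b \<beta> x1 z lh + ereal (1 / 2 * qf L (z - yk))"
  obtains G1 where "g y1 = ereal G1"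
proof -
  obtain y0 where y0: "y0 \<in> Y" "g y0 \<noteq> \<infinity>" "g y0 \<noteq> -\<infinity>"
    using g unfolding proper_convex_on_def by blast
  have "g y1 \<noteq> \<infinity>" using opt y0 unfolding Lagr_plus_qf_eq by force
  moreover have "g y1 \<noteq> -\<infinity>" using g y1 unfolding proper_convex_on_def by blast
  ultimately show ?thesis using that by (cases "g y1") auto
qed

lemma y_step_variational_inequality:
  fixes g :: "real^'b \<Rightarrow> ereal" and A :: "real^'a^'c" and B :: "real^'b^'c" and L :: "real^'b^'b"
  assumes Y: "convex Y" and g: "proper_convex_on Y g" and SL: "symmetric_mat L"
    and y1: "y1 \<in> Y" and yy: "yy \<in> Y" and G1: "g y1 = ereal G1" and Gy: "g yy = ereal Gy"
    and opt: "\<forall>z\<in>Y. Lagr F g A B b \<beta> x1 y1 lh + ereal (1 / 2 * qf L (y1 - yk))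
                   \<le> Lagr F g A B b \<beta> x1 z lh + ereal (1 / 2 * qf L (z - yk))"
  shows "(B *v (yy - y1)) \<bullet> lh - \<beta> * ((A *v x1 + B *v y1 - b) \<bullet> (B *v (yy - y1)))
            + (yy - y1) \<bullet> (L *v (yk - y1)) \<le> Gy - G1"
proof -
  define q where "q y = - (lh \<bullet> (A *v x1 + B *v y - b)) + \<beta> / 2 * (norm (A *v x1 + B *v y - b))\<^sup>2
                    + 1 / 2 * qf L (y - yk)" for y
  define v where "v = yy - y1"
  define slope where "slope = - (lh \<bullet> (B *v v)) + \<beta> * ((A *v x1 + B *v y1 - b) \<bullet> (B *v v)) + v \<bullet> (L *v (y1 - yk))"
  define curv where "curv = \<beta> / 2 * ((B *v v) \<bullet> (B *v v)) + 1 / 2 * qf L v"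
  have "0 \<le> t * (Gy - G1 + slope) + t\<^sup>2 * curv" if t: "0 < t" "t \<le> 1" for t
  proof -
    have yt: "y1 + t *\<^sub>R v = (1 - t) *\<^sub>R y1 + t *\<^sub>R yy" by (simp add: v_def algebra_simps)
    have ytY: "y1 + t *\<^sub>R v \<in> Y" unfolding yt using Y y1 yy t by (intro convexD) auto
    have "g (y1 + t *\<^sub>R v) \<le> ereal (1 - t) * g y1 + ereal t * g yy"
      unfolding yt using g y1 yy t unfolding proper_convex_on_def by auto
    then obtain Gt where Gt: "g (y1 + t *\<^sub>R v) = ereal Gt" "Gt \<le> (1 - t) * G1 + t * Gy"
      using g ytY G1 Gy unfolding proper_convex_on_def by (cases "g (y1 + t *\<^sub>R v)") auto
    have "G1 + q y1 \<le> Gt + q (y1 + t *\<^sub>R v)"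
      using opt ytY G1 Gt(1) unfolding Lagr_plus_qf_eq q_def by force
    then show ?thesis
      using Gt(2) augmented_quadratic_along_line[OF SL, where lh = lh and A = A and x = x1 and B = B
          and b = b and \<beta> = \<beta> and yk = yk and u = y1 and t = t and v = v]
      unfolding q_def[abs_def] slope_def curv_def by (simp add: algebra_simps)
  qed
  then have "0 \<le> Gy - G1 + slope" by (rule nonneg_of_linear_quadratic_nonneg)
  moreover have "v \<bullet> (L *v (y1 - yk)) = - (v \<bullet> (L *v (yk - y1)))"
    by (simp add: matrix_vector_mult_diff_distrib inner_diff_right)
  ultimately show ?thesis unfolding slope_def v_def by (simp add: inner_commute)
qed

section \<open>The quadratic forms \<open>Q\<^sub>k\<close> and \<open>G\<^sub>k\<close>\<close>

lemma inner_transpose_matrix_vector: "v \<bullet> (transpose (B::real^'b^'c) *v l) = (B *v v) \<bullet> l"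
  by (simp add: dot_lmul_matrix[symmetric] inner_commute)

lemma uminus_matrix_vector_mult: "(- (K::real^'m^'n)) *v v = - (K *v v)"
  by (simp add: matrix_vector_mult_def vec_eq_iff sum_negf)

lemma Qtilde_qf_expand:
  "Qtilde_qf D L B \<beta> \<tau> s (u, v, l) = qf D u + qf L v + ((1 - \<tau> * s / (\<tau> + s)) * \<beta>) * ((B *v v) \<bullet> (B *v v))
     + 2 * (- \<tau> / (\<tau> + s)) * ((B *v v) \<bullet> l) + 1 / (\<beta> * (\<tau> + s)) * (l \<bullet> l)"
  unfolding Qtilde_qf_def block3_qf_def
  using qf_transpose_mult_self[of B v] inner_transpose_matrix_vector[of v B l]
  by (simp add: matrix_vector_mult_add_rdistrib scaleR_matrix_vector_assoc[symmetric] inner_add_right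
      uminus_matrix_vector_mult qf_def inner_commute algebra_simps)

lemma Gtilde_qf_expand:
  "Gtilde_qf D L B \<beta> \<tau> s (u, v, l) = qf D u + qf L v + ((1 - s) * \<beta>) * ((B *v v) \<bullet> (B *v v))
     + 2 * (s - 1) * ((B *v v) \<bullet> l) + (2 - \<tau> - s) / \<beta> * (l \<bullet> l)"
  unfolding Gtilde_qf_def block3_qf_def
  using qf_transpose_mult_self[of B v] inner_transpose_matrix_vector[of v B l]
  by (simp add: matrix_vector_mult_add_rdistrib scaleR_matrix_vector_assoc[symmetric] inner_add_right
      uminus_matrix_vector_mult qf_def inner_commute algebra_simps)

lemma prox_linearization_identity:
  fixes A :: "real^'a^'c" and M :: "real^'a^'a" and r lk :: "real^'c" and \<beta> :: real
  assumes SM: "symmetric_mat M"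
  defines "D \<equiv> M - \<beta> *\<^sub>R (transpose A ** A)"
  shows "(- (transpose A *v (lk - \<beta> *\<^sub>R (r - A *v (x1 - xk))))) \<bullet> (x1 - xx)
       + 1/2 * qf M (x1 - xk) - 1/2 * qf M (xx - xk) + 1/2 * qf M (xx - x1)
     = 1/2 * (qf D (xx - x1) - qf D (xx - xk) + qf D (xk - x1)) + (A *v (xx - x1)) \<bullet> (lk - \<beta> *\<^sub>R r)"
proof -
  define a where "a = xx - x1"
  define c where "c = x1 - xk"
  have xs: "xx - xk = a + c" "xk - x1 = - c" "x1 - xx = - a" by (simp_all add: a_def c_def)
  have "(- (transpose A *v l)) \<bullet> (- a) = (A *v a) \<bullet> l" for l
    using inner_transpose_matrix_vector[of a A l] by (simp add: inner_commute)
  moreover have "qf M (a + c) = qf M a + 2 * (a \<bullet> (M *v c)) + qf M c" by (rule qf_add[OF SM])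
  moreover have "A *v (a + c) = A *v a + A *v c" by (simp add: matrix_vector_right_distrib)
  ultimately show ?thesis
    unfolding c_def[symmetric] a_def[symmetric] xs qf_minus D_def qf_diff_transpose_mult_self
    by (simp add: matrix_vector_mult_diff_distrib inner_add_left inner_add_right
        inner_diff_right inner_commute algebra_simps)
qed

text \<open>In the application \<open>u1, u2, u3\<close> are \<open>B y\<close>, \<open>B y\<^sup>k\<^sup>+\<^sup>1\<close>, \<open>B y\<^sup>k\<close>, \<open>r\<close> is the residual
  \<open>A x\<^sup>k\<^sup>+\<^sup>1 + B y\<^sup>k - b\<close> and \<open>l1\<close> is \<open>\<lambda>\<^sup>k\<^sup>+\<^sup>1\<close>.\<close>
lemma multiplier_identity:
  fixes r u1 u2 u3 l lk :: "'a::real_inner" and \<beta> \<tau> s :: real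
  assumes \<beta>: "\<beta> > 0" and \<tau>s: "\<tau> + s > 0"
  defines "l1 \<equiv> (lk - (\<tau> * \<beta>) *\<^sub>R r) - (s * \<beta>) *\<^sub>R (r + u2 - u3)"
  shows "(u1 - u2) \<bullet> (lk - (\<tau> * \<beta>) *\<^sub>R r) - \<beta> * ((r + u2 - u3) \<bullet> (u1 - u2))
       - (u1 - u2) \<bullet> l + (l - (lk - \<beta> *\<^sub>R r)) \<bullet> (r - u3 + u1)
   = 1/2 * ( ((1 - \<tau> * s / (\<tau> + s)) * \<beta>) * ((u1 - u2) \<bullet> (u1 - u2))
              + 2 * (- \<tau> / (\<tau> + s)) * ((u1 - u2) \<bullet> (l - l1))
              + 1 / (\<beta> * (\<tau> + s)) * ((l - l1) \<bullet> (l - l1))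
            - ( ((1 - \<tau> * s / (\<tau> + s)) * \<beta>) * ((u1 - u3) \<bullet> (u1 - u3))
              + 2 * (- \<tau> / (\<tau> + s)) * ((u1 - u3) \<bullet> (l - lk))
              + 1 / (\<beta> * (\<tau> + s)) * ((l - lk) \<bullet> (l - lk)))
            + ( ((1 - s) * \<beta>) * ((u3 - u2) \<bullet> (u3 - u2))
              + 2 * (s - 1) * ((u3 - u2) \<bullet> (\<beta> *\<^sub>R r))
              + (2 - \<tau> - s) / \<beta> * ((\<beta> *\<^sub>R r) \<bullet> (\<beta> *\<^sub>R r))))"
  using \<beta> \<tau>s unfolding l1_def
  apply (simp add: inner_add_left inner_add_right inner_diff_left inner_diff_right)
  apply (simp add: inner_commute)
  apply (simp add: divide_simps)
  apply (simp add: algebra_simps)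
  done

lemma sas_admm_identity:
  fixes A :: "real^'a^'c" and B :: "real^'b^'c" and b ll lk lh l1 lt :: "real^'c"
    and M :: "real^'a^'a" and L :: "real^'b^'b" and xx x1 xk :: "real^'a" and yy y1 yk :: "real^'b"
    and \<beta> \<tau> s :: real
  defines "D \<equiv> M - \<beta> *\<^sub>R (transpose A ** A)"
  assumes SM: "symmetric_mat M" and SL: "symmetric_mat L" and \<beta>: "\<beta> > 0" and \<tau>s: "\<tau> + s > 0"
    and lh: "lh = lk - (\<tau> * \<beta>) *\<^sub>R (A *v x1 + B *v yk - b)"
    and l1: "l1 = lh - (s * \<beta>) *\<^sub>R (A *v x1 + B *v y1 - b)"
    and lt: "lt = lk - \<beta> *\<^sub>R (A *v x1 + B *v yk - b)"
  shows "(- (transpose A *v (lk - \<beta> *\<^sub>R (A *v xk + B *v yk - b)))) \<bullet> (x1 - xx)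
       + 1/2 * qf M (x1 - xk) - 1/2 * qf M (xx - xk) + 1/2 * qf M (xx - x1)
     + ((B *v (yy - y1)) \<bullet> lh - \<beta> * ((A *v x1 + B *v y1 - b) \<bullet> (B *v (yy - y1))) + (yy - y1) \<bullet> (L *v (yk - y1)))
     + ((xx, yy, ll) - (x1, y1, lt)) \<bullet> (- (transpose A *v ll), - (transpose B *v ll), A *v xx + B *v yy - b)
   = 1/2 * (Qtilde_qf D L B \<beta> \<tau> s ((xx, yy, ll) - (x1, y1, l1))
          - Qtilde_qf D L B \<beta> \<tau> s ((xx, yy, ll) - (xk, yk, lk))
          + Gtilde_qf D L B \<beta> \<tau> s ((xk, yk, lk) - (x1, y1, lt)))"
proof -
  define r where "r = A *v x1 + B *v yk - b"
  define Aa where "Aa = A *v (xx - x1)"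
  define u1 where "u1 = B *v yy"
  define u2 where "u2 = B *v y1"
  define u3 where "u3 = B *v yk"
  have Bs: "B *v (yy - y1) = u1 - u2" "B *v (yy - yk) = u1 - u3" "B *v (yk - y1) = u3 - u2"
    by (simp_all add: u1_def u2_def u3_def matrix_vector_mult_diff_distrib)
  have res: "A *v xk + B *v yk - b = r - A *v (x1 - xk)" "A *v x1 + B *v y1 - b = r + u2 - u3"
    "A *v xx + B *v yy - b = Aa + (r - u3 + u1)"
    by (simp_all add: r_def Aa_def u1_def u2_def u3_def matrix_vector_mult_diff_distrib)
  have lams: "lh = lk - (\<tau> * \<beta>) *\<^sub>R r" "l1 = (lk - (\<tau> * \<beta>) *\<^sub>R r) - (s * \<beta>) *\<^sub>R (r + u2 - u3)"
    "lt = lk - \<beta> *\<^sub>R r" "lk - lt = \<beta> *\<^sub>R r"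
    using lh l1 lt res(2) by (simp_all add: r_def)
  have x_block: "(- (transpose A *v (lk - \<beta> *\<^sub>R (A *v xk + B *v yk - b)))) \<bullet> (x1 - xx)
       + 1/2 * qf M (x1 - xk) - 1/2 * qf M (xx - xk) + 1/2 * qf M (xx - x1)
     = 1/2 * (qf D (xx - x1) - qf D (xx - xk) + qf D (xk - x1)) + Aa \<bullet> (lk - \<beta> *\<^sub>R r)"
    unfolding res(1) D_def Aa_def by (rule prox_linearization_identity[OF SM])
  have coupling: "(xx - x1, yy - y1, ll - lt) \<bullet> (- (transpose A *v ll), - (transpose B *v ll), A *v xx + B *v yy - b)
      = - (Aa \<bullet> ll) - (u1 - u2) \<bullet> ll + (ll - (lk - \<beta> *\<^sub>R r)) \<bullet> Aa
        + (ll - (lk - \<beta> *\<^sub>R r)) \<bullet> (r - u3 + u1)"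
    using inner_transpose_matrix_vector[of "xx - x1" A ll] inner_transpose_matrix_vector[of "yy - y1" B ll]
    unfolding res(3) lams(3) by (simp add: Aa_def Bs(1) inner_commute inner_add_right)
  have cancel: "Aa \<bullet> (lk - \<beta> *\<^sub>R r) - Aa \<bullet> ll + (ll - (lk - \<beta> *\<^sub>R r)) \<bullet> Aa = 0"
    by (simp add: inner_commute[of _ Aa] inner_diff_right)
  have prox_y: "(yy - y1) \<bullet> (L *v (yk - y1)) = 1/2 * (qf L (yy - y1) - qf L (yy - yk) + qf L (yk - y1))"
    using qf_diff[OF SL, of "yy - y1" "yk - y1"] by simp
  have regroup: "1/2 * ((a1 + b1 + c1 + d1 + e1) - (a2 + b2 + c2 + d2 + e2) + (a3 + b3 + c3 + d3 + e3))
      = 1/2 * (a1 - a2 + a3) + 1/2 * (b1 - b2 + b3)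
        + 1/2 * ((c1 + d1 + e1) - (c2 + d2 + e2) + (c3 + d3 + e3))"
    for a1 b1 c1 d1 e1 a2 b2 c2 d2 e2 a3 b3 c3 d3 e3 :: real
    by (simp add: field_simps)
  show ?thesis
    unfolding x_block coupling prox_y diff_Pair Qtilde_qf_expand Gtilde_qf_expand Bs res(2) lams(1,2,4)
      regroup multiplier_identity[OF \<beta> \<tau>s, symmetric]
    using cancel by linarith
qed

section \<open>One iteration of SAS-ADMM\<close>

lemma sas_admm_iteration_inequality:
  fixes A :: "real^'a^'c" and B :: "real^'b^'c" and b ll lk lh ln :: "real^'c"
    and M :: "real^'a^'a" and L :: "real^'b^'b" and xx xn xk :: "real^'a" and yy yn yk :: "real^'b"
    and g :: "real^'b \<Rightarrow> ereal" and \<beta> \<tau> s Z G1 :: real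
  defines "lt \<equiv> lk - \<beta> *\<^sub>R (A *v xn + B *v yk - b)"
    and "D \<equiv> M - \<beta> *\<^sub>R (transpose A ** A)"
    and "h \<equiv> - (transpose A *v (lk - \<beta> *\<^sub>R (A *v xk + B *v yk - b)))"
  assumes SM: "symmetric_mat M" and SL: "symmetric_mat L" and \<beta>: "\<beta> > 0" and \<tau>s: "\<tau> + s > 0"
    and lh: "lh = lk - (\<tau> * \<beta>) *\<^sub>R (A *v xn + B *v yk - b)"
    and ln: "ln = lh - (s * \<beta>) *\<^sub>R (A *v xn + B *v yn - b)"
    and x_est: "xsub_objective F h M xk xn - xsub_objective F h M xk xx + 1/2 * qf M (xx - xn) \<le> - Z"
    and G1: "g yn = ereal G1"
    and y_vi: "\<And>Gy. g yy = ereal Gy \<Longrightarrow> (B *v (yy - yn)) \<bullet> lh - \<beta> * ((A *v xn + B *v yn - b) \<bullet> (B *v (yy - yn)))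
            + (yy - yn) \<bullet> (L *v (yk - yn)) \<le> Gy - G1"
    and g_yy: "g yy \<noteq> -\<infinity>"
  shows "ereal (F xx) + g yy - (ereal (F xn) + g yn)
          + ereal (((xx, yy, ll) - (xn, yn, lt)) \<bullet> (- (transpose A *v ll), - (transpose B *v ll), A *v xx + B *v yy - b))
        \<ge> ereal (1 / 2 * (Qtilde_qf D L B \<beta> \<tau> s ((xx, yy, ll) - (xn, yn, ln))
                          - Qtilde_qf D L B \<beta> \<tau> s ((xx, yy, ll) - (xk, yk, lk))
                          + Gtilde_qf D L B \<beta> \<tau> s ((xk, yk, lk) - (xn, yn, lt))) + Z)"
proof (cases "g yy")
  case (real Gy)
  define J where "J = ((xx, yy, ll) - (xn, yn, lt)) \<bullet> (- (transpose A *v ll), - (transpose B *v ll), A *v xx + B *v yy - b)"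
  define RH where "RH = 1 / 2 * (Qtilde_qf D L B \<beta> \<tau> s ((xx, yy, ll) - (xn, yn, ln))
                          - Qtilde_qf D L B \<beta> \<tau> s ((xx, yy, ll) - (xk, yk, lk))
                          + Gtilde_qf D L B \<beta> \<tau> s ((xk, yk, lk) - (xn, yn, lt)))"
  have "h \<bullet> (xn - xx) + 1/2 * qf M (xn - xk) - 1/2 * qf M (xx - xk) + 1/2 * qf M (xx - xn)
     + ((B *v (yy - yn)) \<bullet> lh - \<beta> * ((A *v xn + B *v yn - b) \<bullet> (B *v (yy - yn))) + (yy - yn) \<bullet> (L *v (yk - yn)))
     + J = RH"
    unfolding h_def J_def RH_def D_def lt_def
    by (rule sas_admm_identity[OF SM SL \<beta> \<tau>s lh ln refl])
  moreover have "h \<bullet> (xn - xx) = h \<bullet> xn - h \<bullet> xx" by (simp add: inner_diff_right)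
  ultimately have "RH + Z \<le> F xx + Gy - (F xn + G1) + J"
    using x_est y_vi[OF real] unfolding xsub_objective_def by linarith
  then show ?thesis using real G1 by (simp add: J_def RH_def)
qed (use G1 g_yy in simp_all)

theorem corollary3p1:
  fixes X :: "(real^'n1) set" and Y :: "(real^'n2) set"
    and A :: "real^'n1^'n" and B :: "real^'n2^'n" and b :: "real^'n"
    and g :: "real^'n2 \<Rightarrow> ereal"
    and N :: nat and fj :: "nat \<Rightarrow> real^'n1 \<Rightarrow> real" and gradj :: "nat \<Rightarrow> real^'n1 \<Rightarrow> real^'n1"
    and U :: "(real^'n1) set"
    and H :: "real^'n1^'n1" and \<nu> :: real
    and \<beta> :: real and L :: "real^'n2^'n2" and \<tau> s :: real
    and x :: "nat \<Rightarrow> real^'n1" and y :: "nat \<Rightarrow> real^'n2" and lam :: "nat \<Rightarrow> real^'n"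
    and bx :: "nat \<Rightarrow> real^'n1" and lamh :: "nat \<Rightarrow> real^'n"
    and m :: "nat \<Rightarrow> nat" and \<eta> :: "nat \<Rightarrow> real" and M :: "nat \<Rightarrow> real^'n1^'n1"
    and xi bxi xh e :: "nat \<Rightarrow> nat \<Rightarrow> real^'n1" and \<xi> :: "nat \<Rightarrow> nat \<Rightarrow> nat"
    and k :: nat
  assumes X: "closed X" "convex X" "X \<noteq> {}"
    and Y: "closed Y" "convex Y" "Y \<noteq> {}"
    and g: "proper_convex_on Y g"
    and N: "N \<ge> 1"
    and U: "open U" "X \<subseteq> U"
    and fj_diff: "\<forall>j\<in>{1..N}. \<forall>z\<in>U. (fj j has_derivative (\<lambda>h. gradj j z \<bullet> h)) (at z)"
    and fj_C1: "\<forall>j\<in>{1..N}. continuous_on U (gradj j)"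
    and fj_convex: "\<forall>j\<in>{1..N}. convex_on X (fj j)"
    and H: "pd H" and \<nu>: "\<nu> > 0"
    and lip: "\<forall>j\<in>{1..N}. \<forall>x1\<in>X. \<forall>x2\<in>X.
               sqrt (qf (matrix_inv H) (gradj j x1 - gradj j x2)) \<le> \<nu> * sqrt (qf H (x1 - x2))"
    and \<beta>: "\<beta> > 0" and L: "psd L" and \<tau>s: "(\<tau>, s) \<in> Delta_set"
    and init: "x 0 \<in> X" "y 0 \<in> Y" "bx 0 = x 0"
    and params: "\<forall>j. m j \<ge> 1 \<and> \<eta> j > 0 \<and> symmetric_mat (M j)
                    \<and> psd (M j - \<beta> *\<^sub>R (transpose A ** A))"
    and xsub_init: "\<forall>j. xi j 1 = x j \<and> bxi j 1 = bx j"
    and xsub_step: "\<forall>j t. 1 \<le> t \<and> t \<le> m j \<longrightarrow>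
          (let \<beta>t = 2 / (real t + 1);
               \<gamma>t = 2 / (real t * \<eta> j);
               hj = - (transpose A *v (lam j - \<beta> *\<^sub>R (A *v x j + B *v y j - b)));
               dt = gradj (\<xi> j t) (xh j t) + e j t
           in \<xi> j t \<in> {1..N}
              \<and> xh j t = \<beta>t *\<^sub>R bxi j t + (1 - \<beta>t) *\<^sub>R xi j t
              \<and> bxi j (t + 1) \<in> X
              \<and> (\<forall>z\<in>X. (dt + hj) \<bullet> bxi j (t + 1) + \<gamma>t / 2 * qf H (bxi j (t + 1) - bxi j t)
                           + 1 / 2 * qf (M j) (bxi j (t + 1) - x j)
                         \<le> (dt + hj) \<bullet> z + \<gamma>t / 2 * qf H (z - bxi j t) + 1 / 2 * qf (M j) (z - x j))
              \<and> xi j (t + 1) = \<beta>t *\<^sub>R bxi j (t + 1) + (1 - \<beta>t) *\<^sub>R xi j t)"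
    and xsub_out: "\<forall>j. x (j + 1) = xi j (m j + 1) \<and> bx (j + 1) = bxi j (m j + 1)"
    and lam_half: "\<forall>j. lamh j = lam j - (\<tau> * \<beta>) *\<^sub>R (A *v x (j + 1) + B *v y j - b)"
    and y_step: "\<forall>j. y (j + 1) \<in> Y \<and>
          (\<forall>z\<in>Y. Lagr (favg N fj) g A B b \<beta> (x (j + 1)) (y (j + 1)) (lamh j)
                     + ereal (1 / 2 * qf L (y (j + 1) - y j))
                   \<le> Lagr (favg N fj) g A B b \<beta> (x (j + 1)) z (lamh j)
                     + ereal (1 / 2 * qf L (z - y j)))"
    and lam_step: "\<forall>j. lam (j + 1) = lamh j - (s * \<beta>) *\<^sub>R (A *v x (j + 1) + B *v y (j + 1) - b)"
    and \<eta>k: "0 < \<eta> k" "\<eta> k < 1 / \<nu>"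
  shows "\<forall>xx\<in>X. \<forall>yy\<in>Y. \<forall>ll::real^'n.
    (let w = (xx, yy, ll);
         wk = (x k, y k, lam k);
         wk1 = (x (k + 1), y (k + 1), lam (k + 1));
         lt = lam k - \<beta> *\<^sub>R (A *v x (k + 1) + B *v y k - b);
         wt = (x (k + 1), y (k + 1), lt);
         Jw = (- (transpose A *v ll), - (transpose B *v ll), A *v xx + B *v yy - b);
         Dk = M k - \<beta> *\<^sub>R (transpose A ** A);
         \<delta> = (\<lambda>t. gavg N gradj (xh k t) - (gradj (\<xi> k t) (xh k t) + e k t))
     in (ereal (favg N fj xx) + g yy) - (ereal (favg N fj (x (k + 1))) + g (y (k + 1)))
          + ereal ((w - wt) \<bullet> Jw)
        \<ge> ereal (1 / 2 * (Qtilde_qf Dk L B \<beta> \<tau> s (w - wk1) - Qtilde_qf Dk L B \<beta> \<tau> s (w - wk)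
                          + Gtilde_qf Dk L B \<beta> \<tau> s (wk - wt))
                 + zeta H \<nu> (\<eta> k) (m k) (bx k) (bx (k + 1)) (bxi k) \<delta> xx))"
proof -
  define h where "h = - (transpose A *v (lam k - \<beta> *\<^sub>R (A *v x k + B *v y k - b)))"
  define \<delta> where "\<delta> = (\<lambda>t. gavg N gradj (xh k t) - (gradj (\<xi> k t) (xh k t) + e k t))"
  have desc: "\<forall>a\<in>X. \<forall>b\<in>X. favg N fj a \<le> favg N fj b + gavg N gradj b \<bullet> (a - b) + \<nu> / 2 * qf H (a - b)"
    using favg_descent_inequality[OF N X(2) U(2) fj_diff H \<nu> lip] by blast
  have grad: "\<forall>a\<in>X. \<forall>b\<in>X. favg N fj a + gavg N gradj a \<bullet> (b - a) \<le> favg N fj b"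
    using favg_gradient_inequality[OF N U(2) fj_diff fj_convex] by blast
  note step = xsub_step[unfolded Let_def]
  have iterates: "x j \<in> X \<and> bx j \<in> X" for j
  proof (induction j)
    case (Suc j)
    have "xi j (m j + 1) \<in> X \<and> bxi j (m j + 1) \<in> X"
      using xsub_iterates_in[OF X(2), where xi = "xi j" and bxi = "bxi j" and m = "m j" and n = "m j"]
        Suc xsub_init step by auto
    then show ?case using xsub_out by simp
  qed (use init in simp)
  have M: "psd (M k)" using params \<beta> by (auto intro: psd_of_psd_minus_transpose_mult_self)
  have x_est: "xsub_objective (favg N fj) h (M k) (x k) (x (k + 1)) - xsub_objective (favg N fj) h (M k) (x k) xx
      + 1/2 * qf (M k) (xx - x (k + 1)) \<le> - zeta H \<nu> (\<eta> k) (m k) (bx k) (bx (k + 1)) (bxi k) \<delta> xx"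
    if xx: "xx \<in> X" for xx
    unfolding xsub_out[rule_format, THEN conjunct1] xsub_out[rule_format, THEN conjunct2]
      xsub_init[rule_format, of k, THEN conjunct2, symmetric] \<delta>_def
  proof (rule xsub_estimate[OF X(2) desc grad H M \<nu>, where xh = "xh k" and d = "\<lambda>t. gradj (\<xi> k t) (xh k t) + e k t"])
    show "0 < \<eta> k" "\<eta> k * \<nu> < 1" using \<eta>k \<nu> by (auto simp: pos_less_divide_eq)
    show "xi k 1 \<in> X" "bxi k 1 \<in> X" using iterates xsub_init by auto
    show "1 \<le> m k" using params by blast
  qed (use step xx in \<open>unfold h_def, blast\<close>)+
  have SL: "symmetric_mat L" using L by (simp add: psd_def)
  obtain G1 where G1: "g (y (k + 1)) = ereal G1"
    using y_step_finite[OF g] y_step by blast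
  note y_vi = y_step_variational_inequality[OF Y(2) g SL _ _ G1 _ y_step[rule_format, THEN conjunct2]]
  show ?thesis
    unfolding Let_def \<delta>_def[symmetric]
    by (intro ballI allI sas_admm_iteration_inequality[where lk = "lam k" and lh = "lamh k" and ln = "lam (k + 1)"
          and xn = "x (k + 1)" and yn = "y (k + 1)" and yk = "y k" and xk = "x k" and M = "M k"
          and A = A and B = B and b = b and \<beta> = \<beta> and \<tau> = \<tau> and s = s and g = g and L = L
          and F = "favg N fj",
          OF _ SL \<beta> _ lam_half[rule_format, of k] lam_step[rule_format, of k] x_est[unfolded h_def] G1])
      (use params \<tau>s g y_step y_vi in \<open>auto simp: Delta_set_def proper_convex_on_def\<close>)
qed

end
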